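(* Let $n\ge1$, $K=U(n)$ acting on $\mathcal{O}_\Lambda$ via $k\mapsto\mathrm{diag}(1,k)$, let $\mathrm{M}=\mathrm{diag}(\mu_1,\dots,\mu_n)$ with $\mu_1\ge\dots\ge\mu_n$, and let $p\in\mathcal{O}_\Lambda$ with $\Phi(p)=\mathrm{M}$, so that $p=\begin{pmatrix}c&\mathbf{z}^\dagger\\ \mathbf{z}&\mathrm{M}\end{pmatrix}$ with $\mathbf{z}\in\mathbb{C}^n$ (a column vector) and $c=\sum_{i=1}^{n+1}\lambda_i-\sum_{i=1}^n\mu_i$. Then $T_p(K\cdot p)^\omega$ (the $\omega_\Lambda$-orthogonal complement of the tangent space to the $K$-orbit in $T_p\mathcal{O}_\Lambda$) consists of exactly the matrices $$\begin{pmatrix}0&\mathbf{v}^\dagger\\ \mathbf{v}&0\end{pmatrix},\qquad \mathbf{v}=(c-\mathrm{M})\mathbf{x}+X\mathbf{z},$$ where $X\in\mathfrak{u}(n)$ and $\mathbf{x}\in\mathbb{C}^n$ range over those pairs satisfying $$0=\mathbf{x}^\dagger\mathbf{z}+\mathbf{z}^\dagger\mathbf{x},\qquad 0=\mathbf{x}\mathbf{z}^\dagger+\mathbf{z}\mathbf{x}^\dagger+[X,\mathrm{M}].$$ Moreover, $T_p(K\cdot p)\cap T_p(K\cdot p)^\omega$ consists of exactly the matrices $\begin{pmatrix}0&(Y\mathbf{z})^\dagger\\ Y\mathbf{z}&0\end{pmatrix}$ with $Y\in\mathfrak{k}_{\mathrm{M}}$.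
   Context: $\mathcal{H}_m$ denotes $m\times m$ Hermitian matrices, $\mathfrak{u}(n)$ skew-Hermitian matrices, $\dagger$ conjugate transpose. For a non-increasing real sequence $\lambda_1\ge\dots\ge\lambda_{n+1}$, $\mathcal{O}_\Lambda\subset\mathcal{H}_{n+1}$ is the set of Hermitian matrices with eigenvalues $\lambda_1,\dots,\lambda_{n+1}$, with symplectic form $(\omega_\Lambda)_p([X,p],[Y,p])=\frac{1}{\sqrt{-1}}\mathrm{Tr}(p[X,Y])$ for $X,Y\in\mathfrak{u}(n+1)$. $K=U(n)$ acts by $k\cdot p=\mathrm{diag}(1,k)\,p\,\mathrm{diag}(1,k)^\dagger$ with moment map $\Phi(p)=$ the bottom-right $n\times n$ principal submatrix of $p$ (using $\mathcal{H}_n\cong\mathfrak{u}(n)^*$, $X\mapsto(A\mapsto\frac{1}{\sqrt{-1}}\mathrm{Tr}(XA))$). $\mathfrak{k}=\mathfrak{u}(n)$ and $\mathfrak{k}_{\mathrm{M}}=\{Y\in\mathfrak{u}(n):[Y,\mathrm{M}]=0\}$. *)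

theory Defs
  imports "Jordan_Normal_Form.Schur_Decomposition" "Jordan_Normal_Form.Char_Poly"
begin

text \<open>Complex matrices are Jordan_Normal_Form matrices of type complex mat;
column vectors in C^n are n x 1 matrices. The conjugate transpose is mat_adjoint.\<close>

definition mtrace :: "complex mat \<Rightarrow> complex" where
  "mtrace A = (\<Sum>i<dim_row A. A $$ (i, i))"

definition commutator :: "complex mat \<Rightarrow> complex mat \<Rightarrow> complex mat" where
  "commutator X Y = X * Y - Y * X"

definition hermitian_mats :: "nat \<Rightarrow> complex mat set" where
  "hermitian_mats m = {A \<in> carrier_mat m m. mat_adjoint A = A}"

definition unitary_lie :: "nat \<Rightarrow> complex mat set" where
  "unitary_lie m = {X \<in> carrier_mat m m. mat_adjoint X = - X}"

text \<open>The coadjoint orbit O_Lambda in H_(n+1): Hermitian matrices whose eigenvalues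
  (with multiplicity) are lam 0, ..., lam n, i.e. whose characteristic polynomial is
  the product of the linear factors (x - lam i).\<close>
definition orbit_O :: "nat \<Rightarrow> (nat \<Rightarrow> real) \<Rightarrow> complex mat set" where
  "orbit_O n lam = {A \<in> hermitian_mats (n + 1).
      char_poly A = (\<Prod>i<n + 1. [: - complex_of_real (lam i), 1 :])}"

definition tangent_O :: "nat \<Rightarrow> complex mat \<Rightarrow> complex mat set" where
  "tangent_O n p = {commutator X p | X. X \<in> unitary_lie (n + 1)}"

text \<open>The embedding k |-> diag(1,k) of U(n) in U(n+1) has differential Y |-> diag(0,Y).\<close>
definition embed0 :: "nat \<Rightarrow> complex mat \<Rightarrow> complex mat" where
  "embed0 n Y = four_block_mat (0\<^sub>m 1 1) (0\<^sub>m 1 n) (0\<^sub>m n 1) Y"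

definition tangent_Korbit :: "nat \<Rightarrow> complex mat \<Rightarrow> complex mat set" where
  "tangent_Korbit n p = {commutator (embed0 n Y) p | Y. Y \<in> unitary_lie n}"

text \<open>The KKS form: omega_p([X,p],[Y,p]) = (1/i) Tr(p[X,Y]).\<close>
definition omega_rep :: "complex mat \<Rightarrow> complex mat \<Rightarrow> complex mat \<Rightarrow> complex" where
  "omega_rep p X Y = mtrace (p * commutator X Y) / \<i>"

text \<open>omega-orthogonal complement of a subspace W of T_p O_Lambda (inside T_p O_Lambda):
  A such that omega_p(A,B) = 0 for all B in W, evaluated through (arbitrary)
  representatives A = [X,p], B = [Y,p] with X, Y in u(n+1).\<close>
definition omega_orth :: "nat \<Rightarrow> complex mat \<Rightarrow> complex mat set \<Rightarrow> complex mat set" where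
  "omega_orth n p W = {A \<in> tangent_O n p. \<forall>B \<in> W. \<forall>X \<in> unitary_lie (n + 1).
      \<forall>Y \<in> unitary_lie (n + 1). A = commutator X p \<longrightarrow> B = commutator Y p \<longrightarrow>
        omega_rep p X Y = 0}"

definition moment :: "nat \<Rightarrow> complex mat \<Rightarrow> complex mat" where
  "moment n p = mat n n (\<lambda>(i, j). p $$ (i + 1, j + 1))"

definition diag_of :: "nat \<Rightarrow> (nat \<Rightarrow> real) \<Rightarrow> complex mat" where
  "diag_of n mu = mat n n (\<lambda>(i, j). if i = j then complex_of_real (mu i) else 0)"

definition offdiag_block :: "nat \<Rightarrow> complex mat \<Rightarrow> complex mat" where
  "offdiag_block n v = four_block_mat (0\<^sub>m 1 1) (mat_adjoint v) v (0\<^sub>m n n)"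

end

theory Submission
  imports Defs
begin

(* Write a tangent vector at p as A = [X, p] with X skew-Hermitian, and p in blocks
   p = [[c, z^dagger], [z, M]]. Since omega_p([X, p], [diag(0, Y), p]) = -(1/i) Tr(A' Y), where the
   lower-right block A' of A is Hermitian, testing against Y = i A' shows that A is omega-orthogonal
   to the K-orbit iff A' = 0. A tangent vector is Hermitian and traceless, so once A' = 0 it is the
   off-diagonal block matrix of its lower-left column. For X with lower-left column x and lower-right
   block X', the blocks of [X, p] are the corner -(x^dagger z + z^dagger x), the column
   (c - M) x + (X' - X_00) z and the block x z^dagger + z x^dagger + [X', M]; for X = diag(0, Y) the
   last two become Y z and [Y, M]. Finally c is read off from Tr p = lambda_1 + ... + lambda_(n+1). *)

section \<open>Hermitian and skew-Hermitian matrices\<close>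

lemma index_mat_adjoint [simp]:
  fixes A :: "complex mat"
  shows "dim_row (mat_adjoint A) = dim_col A" "dim_col (mat_adjoint A) = dim_row A"
  "i < dim_col A \<Longrightarrow> j < dim_row A \<Longrightarrow> mat_adjoint A $$ (i, j) = cnj (A $$ (j, i))"
  unfolding mat_adjoint_def by (auto simp: mat_of_rows_def)

lemma mat_adjoint_mult:
  fixes A B :: "complex mat"
  assumes A: "A \<in> carrier_mat m k" and B: "B \<in> carrier_mat k l"
  shows "mat_adjoint (A * B) = mat_adjoint B * mat_adjoint A"
proof (rule eq_matI)
  fix i j
  assume "i < dim_row (mat_adjoint B * mat_adjoint A)" "j < dim_col (mat_adjoint B * mat_adjoint A)"
  then have ij: "i < l" "j < m" using A B by auto
  have "mat_adjoint (A * B) $$ (i, j) = (\<Sum>r<k. cnj (A $$ (j, r)) * cnj (B $$ (r, i)))"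
    using A B ij by (simp add: scalar_prod_def cnj_sum atLeast0LessThan)
  also have "\<dots> = (\<Sum>r<k. cnj (B $$ (r, i)) * cnj (A $$ (j, r)))"
    by (simp only: mult.commute)
  also have "\<dots> = (mat_adjoint B * mat_adjoint A) $$ (i, j)"
    using A B ij by (simp add: scalar_prod_def atLeast0LessThan)
  finally show "mat_adjoint (A * B) $$ (i, j) = (mat_adjoint B * mat_adjoint A) $$ (i, j)" .
qed (use A B in auto)

lemma mat_adjoint_minus:
  fixes A B :: "complex mat"
  assumes "A \<in> carrier_mat m k" and "B \<in> carrier_mat m k"
  shows "mat_adjoint (A - B) = mat_adjoint A - mat_adjoint B"
  by (rule eq_matI) (use assms in auto)

lemma hermitian_mats_iff:
  "A \<in> hermitian_mats m \<longleftrightarrow> A \<in> carrier_mat m m \<and> (\<forall>i<m. \<forall>j<m. A $$ (j, i) = cnj (A $$ (i, j)))"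
proof -
  have "mat_adjoint A = A \<longleftrightarrow> (\<forall>i<m. \<forall>j<m. A $$ (j, i) = cnj (A $$ (i, j)))"
    if A: "A \<in> carrier_mat m m"
  proof (intro iffI allI impI)
    fix i j assume "mat_adjoint A = A" "i < m" "j < m"
    then show "A $$ (j, i) = cnj (A $$ (i, j))"
      using A index_mat_adjoint(3)[of j A i] by simp
  next
    assume h: "\<forall>i<m. \<forall>j<m. A $$ (j, i) = cnj (A $$ (i, j))"
    show "mat_adjoint A = A"
    proof (rule eq_matI)
      fix i j assume "i < dim_row A" "j < dim_col A"
      then have "i < m" "j < m"
        using A by auto
      with h have "A $$ (i, j) = cnj (A $$ (j, i))"
        by blast
      with \<open>i < m\<close> \<open>j < m\<close> show "mat_adjoint A $$ (i, j) = A $$ (i, j)"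
        using A by simp
    qed (use A in auto)
  qed
  then show ?thesis
    unfolding hermitian_mats_def by blast
qed

lemma unitary_lie_iff:
  "X \<in> unitary_lie m \<longleftrightarrow> X \<in> carrier_mat m m \<and> (\<forall>i<m. \<forall>j<m. X $$ (j, i) = - cnj (X $$ (i, j)))"
proof -
  have "mat_adjoint X = - X \<longleftrightarrow> (\<forall>i<m. \<forall>j<m. X $$ (j, i) = - cnj (X $$ (i, j)))"
    if X: "X \<in> carrier_mat m m"
  proof (intro iffI allI impI)
    fix i j assume "mat_adjoint X = - X" "i < m" "j < m"
    then have "cnj (X $$ (i, j)) = - X $$ (j, i)"
      using X index_mat_adjoint(3)[of j X i] index_uminus_mat(1)[of j X i] by simp
    then show "X $$ (j, i) = - cnj (X $$ (i, j))"
      by simp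
  next
    assume h: "\<forall>i<m. \<forall>j<m. X $$ (j, i) = - cnj (X $$ (i, j))"
    show "mat_adjoint X = - X"
    proof (rule eq_matI)
      fix i j assume "i < dim_row (- X)" "j < dim_col (- X)"
      then have "i < m" "j < m"
        using X by auto
      with h have "X $$ (i, j) = - cnj (X $$ (j, i))"
        by blast
      with \<open>i < m\<close> \<open>j < m\<close> show "mat_adjoint X $$ (i, j) = (- X) $$ (i, j)"
        using X by simp
    qed (use X in auto)
  qed
  then show ?thesis
    unfolding unitary_lie_def by blast
qed

(* The entry conditions below loop as rewrite rules; they are only ever used instantiated. *)
lemma hermitian_matsD:
  assumes "A \<in> hermitian_mats m"
  shows "A \<in> carrier_mat m m" and "\<And>i j. i < m \<Longrightarrow> j < m \<Longrightarrow> A $$ (j, i) = cnj (A $$ (i, j))"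
  using assms unfolding hermitian_mats_iff by blast+

lemma unitary_lieD:
  assumes "X \<in> unitary_lie m"
  shows "X \<in> carrier_mat m m" and "\<And>i j. i < m \<Longrightarrow> j < m \<Longrightarrow> X $$ (j, i) = - cnj (X $$ (i, j))"
  using assms unfolding unitary_lie_iff by blast+

lemma commutator_carrier_mat [simp]:
  "X \<in> carrier_mat m m \<Longrightarrow> Y \<in> carrier_mat m m \<Longrightarrow> commutator X Y \<in> carrier_mat m m"
  unfolding commutator_def by auto

lemma commutator_unitary_lie_hermitian:
  assumes X: "X \<in> unitary_lie m" and p: "p \<in> hermitian_mats m"
  shows "commutator X p \<in> hermitian_mats m"
proof -
  have Xc: "X \<in> carrier_mat m m" and pc: "p \<in> carrier_mat m m"
    using X p by (auto simp: unitary_lie_def hermitian_mats_def)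
  have "mat_adjoint (commutator X p) = mat_adjoint p * mat_adjoint X - mat_adjoint X * mat_adjoint p"
    unfolding commutator_def using Xc pc
    by (simp add: mat_adjoint_minus[of "X * p" m m "p * X"] mat_adjoint_mult[of _ m m _ m])
  also have "\<dots> = p * (- X) - (- X) * p"
    using X p by (simp add: unitary_lie_def hermitian_mats_def)
  also have "\<dots> = - (p * X) - - (X * p)"
    using Xc pc by (simp add: uminus_mult_right_mat uminus_mult_left_mat)
  also have "\<dots> = commutator X p"
    unfolding commutator_def by (rule eq_matI) (use Xc pc in auto)
  finally show ?thesis
    unfolding hermitian_mats_def commutator_def using Xc pc by auto
qed

lemma smult_imaginary_unit_hermitian:
  assumes "H \<in> hermitian_mats n"
  shows "\<i> \<cdot>\<^sub>m H \<in> unitary_lie n"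
proof -
  note Hc = hermitian_matsD(1)[OF assms] and Hh = hermitian_matsD(2)[OF assms]
  have "(\<i> \<cdot>\<^sub>m H) $$ (j, i) = - cnj ((\<i> \<cdot>\<^sub>m H) $$ (i, j))" if "i < n" "j < n" for i j
    using Hc Hh[OF that] that by simp
  moreover have "\<i> \<cdot>\<^sub>m H \<in> carrier_mat n n"
    using Hc by simp
  ultimately show ?thesis
    unfolding unitary_lie_iff by blast
qed

lemma moment_hermitian:
  assumes "A \<in> hermitian_mats (Suc n)"
  shows "moment n A \<in> hermitian_mats n"
proof -
  note Ah = hermitian_matsD(2)[OF assms]
  have "moment n A $$ (j, i) = cnj (moment n A $$ (i, j))" if "i < n" "j < n" for i j
    using Ah[of "Suc i" "Suc j"] that by (simp add: moment_def)
  moreover have "moment n A \<in> carrier_mat n n"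
    by (simp add: moment_def)
  ultimately show ?thesis
    unfolding hermitian_mats_iff by blast
qed

lemma four_block_unitary_lie:
  assumes X: "X \<in> unitary_lie n" and x: "x \<in> carrier_mat n 1"
  shows "four_block_mat (0\<^sub>m 1 1) (- mat_adjoint x) x X \<in> unitary_lie (n + 1)"
proof -
  note Xc = unitary_lieD(1)[OF X] and Xs = unitary_lieD(2)[OF X]
  let ?X = "four_block_mat (0\<^sub>m 1 1) (- mat_adjoint x) x X"
  have "?X $$ (j, i) = - cnj (?X $$ (i, j))" if "i < n + 1" "j < n + 1" for i j
    using that Xc x Xs[of "i - 1" "j - 1"] by (cases "i = 0"; cases "j = 0") auto
  moreover have "?X \<in> carrier_mat (n + 1) (n + 1)"
    using Xc x by auto
  ultimately show ?thesis
    unfolding unitary_lie_iff by blast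
qed

lemma embed0_carrier_mat [simp]: "Y \<in> carrier_mat n n \<Longrightarrow> embed0 n Y \<in> carrier_mat (Suc n) (Suc n)"
  unfolding embed0_def by auto

lemma embed0_unitary_lie:
  assumes "Y \<in> unitary_lie n"
  shows "embed0 n Y \<in> unitary_lie (n + 1)"
proof -
  have "- mat_adjoint (0\<^sub>m n 1) = (0\<^sub>m 1 n :: complex mat)"
    by (rule eq_matI) auto
  then show ?thesis
    using four_block_unitary_lie[OF assms, of "0\<^sub>m n 1"] by (simp add: embed0_def)
qed

section \<open>Traces\<close>

lemma mtrace_mult_comm:
  assumes A: "A \<in> carrier_mat m k" and B: "B \<in> carrier_mat k m"
  shows "mtrace (A * B) = mtrace (B * A)"
proof -
  have "mtrace (A * B) = (\<Sum>i<m. \<Sum>j<k. A $$ (i, j) * B $$ (j, i))"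
    using A B by (simp add: mtrace_def scalar_prod_def atLeast0LessThan)
  also have "\<dots> = (\<Sum>j<k. \<Sum>i<m. B $$ (j, i) * A $$ (i, j))"
    by (subst sum.swap) (simp add: mult.commute)
  also have "\<dots> = mtrace (B * A)"
    using A B by (simp add: mtrace_def scalar_prod_def atLeast0LessThan)
  finally show ?thesis .
qed

lemma mtrace_minus:
  "A \<in> carrier_mat m m \<Longrightarrow> B \<in> carrier_mat m m \<Longrightarrow> mtrace (A - B) = mtrace A - mtrace B"
  by (simp add: mtrace_def sum_subtractf)

lemma mtrace_uminus: "A \<in> carrier_mat m m \<Longrightarrow> mtrace (- A) = - mtrace A"
  by (simp add: mtrace_def sum_negf)

lemma mtrace_smult: "A \<in> carrier_mat m m \<Longrightarrow> mtrace (a \<cdot>\<^sub>m A) = a * mtrace A"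
  by (simp add: mtrace_def sum_distrib_left)

lemma mtrace_commutator:
  "X \<in> carrier_mat m m \<Longrightarrow> Y \<in> carrier_mat m m \<Longrightarrow> mtrace (commutator X Y) = 0"
  unfolding commutator_def by (simp add: mtrace_minus[of _ m] mtrace_mult_comm[of X m m Y])

lemma commutator_antisym:
  "X \<in> carrier_mat m m \<Longrightarrow> Y \<in> carrier_mat m m \<Longrightarrow> commutator X Y = - commutator Y X"
  unfolding commutator_def by (rule eq_matI) auto

lemma mtrace_mult_commutator:
  assumes X: "X \<in> carrier_mat m m" and Y: "Y \<in> carrier_mat m m" and p: "p \<in> carrier_mat m m"
  shows "mtrace (p * commutator X Y) = - mtrace (commutator X p * Y)"
proof -
  have cyclic: "mtrace (p * (Y * X)) = mtrace (X * p * Y)"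
    using mtrace_mult_comm[of "p * Y" m m X] X Y p by (simp add: assoc_mult_mat[of _ m m _ m _ m])
  have "mtrace (p * commutator X Y) = mtrace (p * X * Y) - mtrace (p * (Y * X))"
    unfolding commutator_def using X Y p
    by (simp add: mult_minus_distrib_mat[of p m m "X * Y" m "Y * X"] mtrace_minus[of _ m]
        assoc_mult_mat[of _ m m _ m _ m])
  also have "\<dots> = - mtrace (commutator X p * Y)"
    unfolding cyclic commutator_def using X Y p
    by (simp add: minus_mult_distrib_mat[of "X * p" m m "p * X" Y m] mtrace_minus[of _ m])
  finally show ?thesis .
qed

lemma mtrace_similar:
  assumes "similar_mat A B"
  shows "mtrace A = mtrace B"
proof -
  from similar_matD[OF assms] obtain k P Q where
    carr: "{A, B, P, Q} \<subseteq> carrier_mat k k" and QP: "Q * P = 1\<^sub>m k" and A: "A = P * B * Q"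
    by blast
  then have B: "B \<in> carrier_mat k k" and P: "P \<in> carrier_mat k k" and Q: "Q \<in> carrier_mat k k"
    by auto
  have "mtrace A = mtrace (P * (B * Q))"
    using A assoc_mult_mat[OF P B Q] by simp
  also have "\<dots> = mtrace (B * Q * P)"
    using P B Q by (simp add: mtrace_mult_comm[of P k k "B * Q"])
  also have "\<dots> = mtrace B"
    using assoc_mult_mat[OF B Q P] QP B by simp
  finally show ?thesis .
qed

lemma mtrace_split_corner:
  "A \<in> carrier_mat (Suc n) (Suc n) \<Longrightarrow> mtrace A = A $$ (0, 0) + mtrace (moment n A)"
  by (simp add: mtrace_def moment_def sum.lessThan_Suc_shift del: sum.lessThan_Suc)

lemma hermitian_eq_zero_if_mtrace_square_zero:
  assumes H: "H \<in> hermitian_mats n" and tr: "mtrace (H * H) = 0"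
  shows "H = 0\<^sub>m n n"
proof -
  note Hc = hermitian_matsD(1)[OF H] and Hh = hermitian_matsD(2)[OF H]
  have "mtrace (H * H) = (\<Sum>i<n. \<Sum>l<n. H $$ (i, l) * H $$ (l, i))"
    using Hc by (simp add: mtrace_def scalar_prod_def atLeast0LessThan)
  also have "\<dots> = (\<Sum>i<n. \<Sum>l<n. H $$ (i, l) * cnj (H $$ (i, l)))"
  proof (intro sum.cong refl)
    fix i l assume "i \<in> {..<n}" "l \<in> {..<n}"
    then show "H $$ (i, l) * H $$ (l, i) = H $$ (i, l) * cnj (H $$ (i, l))"
      using Hh[of i l] by simp
  qed
  also have "\<dots> = of_real (\<Sum>i<n. \<Sum>l<n. (cmod (H $$ (i, l)))\<^sup>2)"
    by (simp add: complex_norm_square del: of_real_power)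
  finally have "(\<Sum>i<n. \<Sum>l<n. (cmod (H $$ (i, l)))\<^sup>2) = 0"
    using tr of_real_eq_0_iff by metis
  then have "H $$ (i, l) = 0" if "i < n" "l < n" for i l
    using that by (simp add: sum_nonneg_eq_0_iff sum_nonneg)
  then show ?thesis
    using Hc by (intro eq_matI) auto
qed

lemma coeff_linear_factors_subleading:
  fixes x :: "'a :: idom"
  shows "coeff (\<Prod>a\<leftarrow>x # xs. [:- a, 1:]) (length xs) = - sum_list (x # xs)"
proof (induction xs arbitrary: x)
  case Nil
  show ?case by simp
next
  case (Cons y ys)
  let ?Q = "\<Prod>a\<leftarrow>y # ys. [:- a, 1:]"
  have "monic ?Q"
    by (rule monic_prod_list) auto
  moreover have "degree ?Q = length (y # ys)"
    by (rule degree_linear_factors)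
  ultimately have "coeff ?Q (Suc (length ys)) = 1"
    by simp
  with Cons.IH[of y] show ?case
    by (simp add: mult_pCons_left)
qed

lemma sum_list_eq_if_linear_factors_eq:
  fixes xs ys :: "'a :: idom list"
  assumes eq: "(\<Prod>a\<leftarrow>xs. [:- a, 1:]) = (\<Prod>a\<leftarrow>ys. [:- a, 1:])"
  shows "sum_list xs = sum_list ys"
proof -
  have len: "length xs = length ys"
    by (metis eq degree_linear_factors)
  show ?thesis
  proof (cases xs)
    case Nil
    with len show ?thesis by simp
  next
    case (Cons x xs')
    with len obtain y ys' where ys: "ys = y # ys'" and len': "length ys' = length xs'"
      by (cases ys) auto
    have "- sum_list xs = coeff (\<Prod>a\<leftarrow>xs. [:- a, 1:]) (length xs')"
      using coeff_linear_factors_subleading[of x xs'] Cons by simp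
    also have "\<dots> = coeff (\<Prod>a\<leftarrow>ys. [:- a, 1:]) (length ys')"
      by (simp only: eq len')
    also have "\<dots> = - sum_list ys"
      using coeff_linear_factors_subleading[of y ys'] ys by simp
    finally show ?thesis
      by simp
  qed
qed

lemma mtrace_eq_sum_eigenvalues:
  assumes A: "A \<in> carrier_mat m m" and cp: "char_poly A = (\<Prod>a\<leftarrow>es. [:- a, 1:])"
  shows "mtrace A = sum_list es"
proof -
  obtain B where B: "B \<in> carrier_mat m m" "upper_triangular B" "similar_mat A B"
    using schur_decomposition_exists[OF A cp] by blast
  have "sum_list es = sum_list (diag_mat B)"
    using sum_list_eq_if_linear_factors_eq cp char_poly_similar[OF B(3)]
      char_poly_upper_triangular[OF B(1,2)] by metis
  also have "\<dots> = mtrace B"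
    using B(1) by (simp add: diag_mat_def mtrace_def sum_list_sum_nth atLeast0LessThan)
  finally show ?thesis
    using mtrace_similar[OF B(3)] by simp
qed

lemma mtrace_orbit_O:
  assumes "p \<in> orbit_O n lam"
  shows "mtrace p = (\<Sum>i<n + 1. complex_of_real (lam i))"
proof -
  let ?es = "map (\<lambda>i. complex_of_real (lam i)) [0..<n + 1]"
  have "char_poly p = (\<Prod>a\<leftarrow>?es. [:- a, 1:])"
    using assms prod.distinct_set_conv_list[of "[0..<n + 1]" "\<lambda>i. [:- complex_of_real (lam i), 1:]"]
    by (simp add: orbit_O_def atLeast0LessThan o_def)
  moreover have "p \<in> carrier_mat (n + 1) (n + 1)"
    using assms by (simp add: orbit_O_def hermitian_mats_def)
  ultimately have "mtrace p = sum_list ?es"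
    by (rule mtrace_eq_sum_eigenvalues[rotated])
  then show ?thesis
    using sum.distinct_set_conv_list[of "[0..<n + 1]" "\<lambda>i. complex_of_real (lam i)"]
    by (simp add: atLeast0LessThan o_def)
qed

section \<open>The symplectic complement of the K-orbit\<close>

lemma omega_rep_eq_left:
  "X \<in> carrier_mat m m \<Longrightarrow> Y \<in> carrier_mat m m \<Longrightarrow> p \<in> carrier_mat m m \<Longrightarrow>
    omega_rep p X Y = - mtrace (commutator X p * Y) / \<i>"
  unfolding omega_rep_def by (simp add: mtrace_mult_commutator)

lemma omega_rep_eq_right:
  assumes X: "X \<in> carrier_mat m m" and Y: "Y \<in> carrier_mat m m" and p: "p \<in> carrier_mat m m"
  shows "omega_rep p X Y = mtrace (commutator Y p * X) / \<i>"
proof -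
  have "p * commutator X Y = - (p * commutator Y X)"
    using X Y carrier_matD[OF p] carrier_matD[OF commutator_carrier_mat[OF Y X]]
    by (simp add: commutator_antisym[of X m Y] uminus_mult_right_mat)
  then have "mtrace (p * commutator X Y) = - mtrace (p * commutator Y X)"
    using X Y p by (simp add: mtrace_uminus[of _ m])
  then show ?thesis
    using X Y p by (simp add: omega_rep_def mtrace_mult_commutator)
qed

lemma mtrace_mult_embed0:
  assumes A: "A \<in> carrier_mat (Suc n) (Suc n)" and Y: "Y \<in> carrier_mat n n"
  shows "mtrace (A * embed0 n Y) = mtrace (moment n A * Y)"
proof -
  have E: "embed0 n Y $$ (i, j) = (if i = 0 \<or> j = 0 then 0 else Y $$ (i - 1, j - 1))"
    if "i < Suc n" "j < Suc n" for i j
    using that Y by (auto simp: embed0_def)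
  have "mtrace (A * embed0 n Y) = (\<Sum>i<Suc n. \<Sum>l<Suc n. A $$ (i, l) * embed0 n Y $$ (l, i))"
    using A carrier_matD[OF embed0_carrier_mat[OF Y]]
    by (simp add: mtrace_def scalar_prod_def atLeast0LessThan del: sum.lessThan_Suc)
  also have "\<dots> = (\<Sum>i<n. \<Sum>l<n. A $$ (Suc i, Suc l) * Y $$ (l, i))"
    by (simp only: sum.lessThan_Suc_shift) (simp add: E)
  also have "\<dots> = mtrace (moment n A * Y)"
    using Y by (simp add: mtrace_def moment_def scalar_prod_def atLeast0LessThan cong: sum.cong_simp)
  finally show ?thesis .
qed

lemma omega_rep_embed0:
  assumes "X \<in> carrier_mat (Suc n) (Suc n)" "Y \<in> carrier_mat n n" "p \<in> carrier_mat (Suc n) (Suc n)"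
  shows "omega_rep p X (embed0 n Y) = - mtrace (moment n (commutator X p) * Y) / \<i>"
  using assms by (simp add: omega_rep_eq_left mtrace_mult_embed0)

lemma moment_eq_zero_if_omega_orth_tangent_Korbit:
  assumes p: "p \<in> hermitian_mats (n + 1)" and A: "A \<in> omega_orth n p (tangent_Korbit n p)"
  shows "moment n A = 0\<^sub>m n n"
proof -
  obtain X where X: "X \<in> unitary_lie (n + 1)" and AX: "A = commutator X p"
    using A unfolding omega_orth_def tangent_O_def by blast
  define H where "H = moment n A"
  have H: "H \<in> hermitian_mats n"
    unfolding H_def AX using commutator_unitary_lie_hermitian[OF X p] by (simp add: moment_hermitian)
  have Hc: "H \<in> carrier_mat n n"
    by (rule hermitian_matsD(1)[OF H])
  have iH: "\<i> \<cdot>\<^sub>m H \<in> unitary_lie n"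
    using H by (rule smult_imaginary_unit_hermitian)
  then have "commutator (embed0 n (\<i> \<cdot>\<^sub>m H)) p \<in> tangent_Korbit n p"
    unfolding tangent_Korbit_def by blast
  then have "omega_rep p X (embed0 n (\<i> \<cdot>\<^sub>m H)) = 0"
    using A X AX embed0_unitary_lie[OF iH] unfolding omega_orth_def by blast
  then have "mtrace (H * (\<i> \<cdot>\<^sub>m H)) = 0"
    using unitary_lieD(1)[OF X] hermitian_matsD(1)[OF p] Hc by (simp add: omega_rep_embed0 H_def AX)
  then have "mtrace (H * H) = 0"
    using Hc by (simp add: mult_smult_distrib[of H n n H n] mtrace_smult[of _ n])
  then show ?thesis
    unfolding H_def[symmetric] by (rule hermitian_eq_zero_if_mtrace_square_zero[OF H])
qed

lemma omega_orth_tangent_KorbitI: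
  assumes p: "p \<in> hermitian_mats (n + 1)" and A: "A \<in> tangent_O n p" and A0: "moment n A = 0\<^sub>m n n"
  shows "A \<in> omega_orth n p (tangent_Korbit n p)"
proof -
  have pc: "p \<in> carrier_mat (Suc n) (Suc n)"
    using hermitian_matsD(1)[OF p] by simp
  have "omega_rep p X Z = 0"
    if B: "B \<in> tangent_Korbit n p" and X: "X \<in> unitary_lie (n + 1)"
      and Z: "Z \<in> unitary_lie (n + 1)" and AX: "A = commutator X p" and BZ: "B = commutator Z p"
    for B X Z
  proof -
    obtain Y where Y: "Y \<in> unitary_lie n" and BY: "B = commutator (embed0 n Y) p"
      using B unfolding tangent_Korbit_def by blast
    have Xc: "X \<in> carrier_mat (Suc n) (Suc n)" and Zc: "Z \<in> carrier_mat (Suc n) (Suc n)"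
      and Yc: "Y \<in> carrier_mat n n"
      using X Z Y by (simp_all add: unitary_lie_def)
    have "omega_rep p X Z = mtrace (B * X) / \<i>"
      using Xc Zc pc BZ by (simp add: omega_rep_eq_right)
    also have "\<dots> = omega_rep p X (embed0 n Y)"
      using Xc Yc pc BY by (simp add: omega_rep_eq_right)
    also have "\<dots> = 0"
      using Xc Yc pc A0 AX by (simp add: omega_rep_embed0 mtrace_def)
    finally show ?thesis .
  qed
  then show ?thesis
    using A unfolding omega_orth_def by blast
qed

lemma omega_orth_tangent_Korbit_iff:
  assumes "p \<in> hermitian_mats (n + 1)"
  shows "A \<in> omega_orth n p (tangent_Korbit n p) \<longleftrightarrow> A \<in> tangent_O n p \<and> moment n A = 0\<^sub>m n n"
  using assms moment_eq_zero_if_omega_orth_tangent_Korbit omega_orth_tangent_KorbitI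
  unfolding omega_orth_def by blast

section \<open>Block decomposition\<close>

(* In the block form p = [[c, z^dagger], [z, M]] of the paper, z is lower_left_block n p and
   M is moment n p. *)
definition lower_left_block :: "nat \<Rightarrow> complex mat \<Rightarrow> complex mat" where
  "lower_left_block n A = mat n 1 (\<lambda>(i, j). A $$ (i + 1, 0))"

lemma lower_left_block_carrier_mat [simp]: "lower_left_block n A \<in> carrier_mat n 1"
  by (simp add: lower_left_block_def)

lemma dim_lower_left_block [simp]:
  "dim_row (lower_left_block n A) = n" "dim_col (lower_left_block n A) = 1"
  by (simp_all add: lower_left_block_def)

lemma moment_carrier_mat [simp]: "moment n A \<in> carrier_mat n n"
  by (simp add: moment_def)

lemma hermitian_eq_offdiag_block:
  assumes A: "A \<in> hermitian_mats (n + 1)" and tr: "mtrace A = 0" and A0: "moment n A = 0\<^sub>m n n"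
  shows "A = offdiag_block n (lower_left_block n A)"
proof -
  note Ac = hermitian_matsD(1)[OF A] and Ah = hermitian_matsD(2)[OF A]
  have lower: "A $$ (Suc i, Suc j) = 0" if "i < n" "j < n" for i j
    using arg_cong[OF A0, of "\<lambda>B. B $$ (i, j)"] that by (simp add: moment_def)
  have corner: "A $$ (0, 0) = 0"
    using mtrace_split_corner[of A n] Ac tr A0 by (simp add: mtrace_def)
  show ?thesis
  proof (rule eq_matI)
    fix i j assume "i < dim_row (offdiag_block n (lower_left_block n A))"
      "j < dim_col (offdiag_block n (lower_left_block n A))"
    then have ij: "i < Suc n" "j < Suc n"
      by (simp_all add: offdiag_block_def)
    show "A $$ (i, j) = offdiag_block n (lower_left_block n A) $$ (i, j)"
      using ij corner lower[of "i - 1" "j - 1"] Ah[of j 0]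
      by (cases "i = 0"; cases "j = 0") (simp_all add: offdiag_block_def lower_left_block_def)
  qed (use Ac in \<open>simp_all add: offdiag_block_def\<close>)
qed

lemma tangent_O_eq_offdiag_block:
  assumes p: "p \<in> hermitian_mats (n + 1)" and A: "A \<in> tangent_O n p" and A0: "moment n A = 0\<^sub>m n n"
  shows "A = offdiag_block n (lower_left_block n A)"
proof -
  obtain X where X: "X \<in> unitary_lie (n + 1)" and AX: "A = commutator X p"
    using A unfolding tangent_O_def by blast
  show ?thesis
  proof (rule hermitian_eq_offdiag_block[OF _ _ A0])
    show "A \<in> hermitian_mats (n + 1)"
      unfolding AX using X p by (rule commutator_unitary_lie_hermitian)
    show "mtrace A = 0"
      unfolding AX using unitary_lieD(1)[OF X] hermitian_matsD(1)[OF p] by (rule mtrace_commutator)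
  qed
qed

lemma commutator_index_split:
  assumes "X \<in> carrier_mat (Suc n) (Suc n)" "p \<in> carrier_mat (Suc n) (Suc n)" "i < Suc n" "j < Suc n"
  shows "commutator X p $$ (i, j) = X $$ (i, 0) * p $$ (0, j) - p $$ (i, 0) * X $$ (0, j)
    + (\<Sum>l<n. X $$ (i, Suc l) * p $$ (Suc l, j) - p $$ (i, Suc l) * X $$ (Suc l, j))"
proof -
  have "commutator X p $$ (i, j) =
      (\<Sum>l<Suc n. X $$ (i, l) * p $$ (l, j)) - (\<Sum>l<Suc n. p $$ (i, l) * X $$ (l, j))"
    using assms unfolding commutator_def
    by (simp add: scalar_prod_def atLeast0LessThan del: sum.lessThan_Suc)
  then show ?thesis
    by (simp add: sum.lessThan_Suc_shift sum_subtractf del: sum.lessThan_Suc)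
qed

lemma smult_one_minus_mult:
  fixes M x :: "complex mat"
  assumes "M \<in> carrier_mat n n" "x \<in> carrier_mat n k"
  shows "(a \<cdot>\<^sub>m 1\<^sub>m n - M) * x = a \<cdot>\<^sub>m x - M * x"
  using assms by (simp add: minus_mult_distrib_mat[of _ n n M x k] mult_smult_assoc_mat[of "1\<^sub>m n" n n x k])

lemma minus_smult_one_mult:
  fixes M x :: "complex mat"
  assumes "M \<in> carrier_mat n n" "x \<in> carrier_mat n k"
  shows "(M - a \<cdot>\<^sub>m 1\<^sub>m n) * x = M * x - a \<cdot>\<^sub>m x"
  using assms by (simp add: minus_mult_distrib_mat[of M n n _ x k] mult_smult_assoc_mat[of "1\<^sub>m n" n n x k])

context
  fixes n :: nat and X p :: "complex mat"
  assumes X: "X \<in> unitary_lie (n + 1)" and p: "p \<in> hermitian_mats (n + 1)"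
begin

lemma moment_commutator:
  "moment n (commutator X p) = lower_left_block n X * mat_adjoint (lower_left_block n p)
    + lower_left_block n p * mat_adjoint (lower_left_block n X) + commutator (moment n X) (moment n p)"
    (is "_ = ?R")
proof (rule eq_matI)
  have Xc: "X \<in> carrier_mat (Suc n) (Suc n)" and pc: "p \<in> carrier_mat (Suc n) (Suc n)"
    using unitary_lieD(1)[OF X] hermitian_matsD(1)[OF p] by simp_all
  fix i j assume "i < dim_row ?R" "j < dim_col ?R"
  then have ij: "i < n" "j < n"
    by (simp_all add: lower_left_block_def commutator_def moment_def)
  have X0: "X $$ (0, Suc j) = - cnj (X $$ (Suc j, 0))"
    using unitary_lieD(2)[OF X, of "Suc j" 0] ij by simp
  have p0: "p $$ (0, Suc j) = cnj (p $$ (Suc j, 0))"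
    using hermitian_matsD(2)[OF p, of "Suc j" 0] ij by simp
  have "moment n (commutator X p) $$ (i, j) = commutator X p $$ (Suc i, Suc j)"
    using ij by (simp add: moment_def)
  also have "\<dots> = X $$ (Suc i, 0) * cnj (p $$ (Suc j, 0)) + p $$ (Suc i, 0) * cnj (X $$ (Suc j, 0))
      + (\<Sum>l<n. X $$ (Suc i, Suc l) * p $$ (Suc l, Suc j) - p $$ (Suc i, Suc l) * X $$ (Suc l, Suc j))"
    using commutator_index_split[OF Xc pc, of "Suc i" "Suc j"] ij X0 p0 by simp
  also have "\<dots> = ?R $$ (i, j)"
    using ij by (simp add: lower_left_block_def moment_def commutator_def scalar_prod_def
        sum_subtractf atLeast0LessThan cong: sum.cong_simp)
  finally show "moment n (commutator X p) $$ (i, j) = ?R $$ (i, j)" .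
qed (simp_all add: lower_left_block_def commutator_def moment_def)

lemma lower_left_block_commutator:
  "lower_left_block n (commutator X p) = (p $$ (0, 0) \<cdot>\<^sub>m 1\<^sub>m n - moment n p) * lower_left_block n X
    + (moment n X - X $$ (0, 0) \<cdot>\<^sub>m 1\<^sub>m n) * lower_left_block n p"
proof -
  have Xc: "X \<in> carrier_mat (Suc n) (Suc n)" and pc: "p \<in> carrier_mat (Suc n) (Suc n)"
    using unitary_lieD(1)[OF X] hermitian_matsD(1)[OF p] by simp_all
  have "lower_left_block n (commutator X p) =
      p $$ (0, 0) \<cdot>\<^sub>m lower_left_block n X - moment n p * lower_left_block n X
      + (moment n X * lower_left_block n p - X $$ (0, 0) \<cdot>\<^sub>m lower_left_block n p)"
    (is "_ = ?S")
  proof (rule eq_matI)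
    fix i j assume "i < dim_row ?S" "j < dim_col ?S"
    then have "i < n" and "j = 0"
      by (simp_all add: lower_left_block_def)
    then show "lower_left_block n (commutator X p) $$ (i, j) = ?S $$ (i, j)"
      using commutator_index_split[OF Xc pc, of "Suc i" 0]
      by (simp add: lower_left_block_def moment_def scalar_prod_def sum_subtractf atLeast0LessThan
          algebra_simps cong: sum.cong_simp)
  qed (simp_all add: lower_left_block_def)
  then show ?thesis
    by (simp add: smult_one_minus_mult[OF moment_carrier_mat lower_left_block_carrier_mat]
        minus_smult_one_mult[OF moment_carrier_mat lower_left_block_carrier_mat])
qed

lemma commutator_corner:
  "commutator X p $$ (0, 0) = - (mat_adjoint (lower_left_block n X) * lower_left_block n p
    + mat_adjoint (lower_left_block n p) * lower_left_block n X) $$ (0, 0)"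
proof -
  have Xc: "X \<in> carrier_mat (Suc n) (Suc n)" and pc: "p \<in> carrier_mat (Suc n) (Suc n)"
    using unitary_lieD(1)[OF X] hermitian_matsD(1)[OF p] by simp_all
  have X0: "X $$ (0, Suc l) = - cnj (X $$ (Suc l, 0))" if "l < n" for l
    using unitary_lieD(2)[OF X, of "Suc l" 0] that by simp
  have p0: "p $$ (0, Suc l) = cnj (p $$ (Suc l, 0))" if "l < n" for l
    using hermitian_matsD(2)[OF p, of "Suc l" 0] that by simp
  have "commutator X p $$ (0, 0) =
      (\<Sum>l<n. X $$ (0, Suc l) * p $$ (Suc l, 0) - p $$ (0, Suc l) * X $$ (Suc l, 0))"
    using commutator_index_split[OF Xc pc, of 0 0] by (simp add: mult.commute)
  also have "\<dots> =
      (\<Sum>l<n. - (cnj (X $$ (Suc l, 0)) * p $$ (Suc l, 0) + cnj (p $$ (Suc l, 0)) * X $$ (Suc l, 0)))"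
    by (intro sum.cong refl) (simp add: X0 p0 mult.commute)
  also have "\<dots> = - (mat_adjoint (lower_left_block n X) * lower_left_block n p
    + mat_adjoint (lower_left_block n p) * lower_left_block n X) $$ (0, 0)"
    by (simp add: lower_left_block_def scalar_prod_def sum_negf sum_subtractf atLeast0LessThan
        cong: sum.cong_simp)
  finally show ?thesis .
qed

end

lemma unitary_lie_moment_minus_corner:
  assumes X: "X \<in> unitary_lie (n + 1)"
  shows "moment n X - X $$ (0, 0) \<cdot>\<^sub>m 1\<^sub>m n \<in> unitary_lie n"
proof -
  note Xs = unitary_lieD(2)[OF X]
  have a: "cnj (X $$ (0, 0)) = - X $$ (0, 0)"
    using Xs[of 0 0] by (metis minus_minus zero_less_Suc Suc_eq_plus1)
  have "(moment n X - X $$ (0, 0) \<cdot>\<^sub>m 1\<^sub>m n) $$ (j, i)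
      = - cnj ((moment n X - X $$ (0, 0) \<cdot>\<^sub>m 1\<^sub>m n) $$ (i, j))" if "i < n" "j < n" for i j
    using that a Xs[of "Suc i" "Suc j"] by (simp add: moment_def)
  moreover have "moment n X - X $$ (0, 0) \<cdot>\<^sub>m 1\<^sub>m n \<in> carrier_mat n n"
    unfolding carrier_mat_def by simp
  ultimately show ?thesis
    unfolding unitary_lie_iff by blast
qed

lemma commutator_minus_smult_one:
  fixes X M :: "complex mat"
  assumes X: "X \<in> carrier_mat n n" and M: "M \<in> carrier_mat n n"
  shows "commutator (X - a \<cdot>\<^sub>m 1\<^sub>m n) M = commutator X M"
proof -
  have "(X - a \<cdot>\<^sub>m 1\<^sub>m n) * M = X * M - a \<cdot>\<^sub>m M"
    using X M by (simp add: minus_smult_one_mult)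
  moreover have "M * (X - a \<cdot>\<^sub>m 1\<^sub>m n) = M * X - a \<cdot>\<^sub>m M"
    using X M by (simp add: mult_minus_distrib_mat[of M n n X n] mult_smult_distrib[of M n n "1\<^sub>m n" n])
  ultimately show ?thesis
    unfolding commutator_def by (intro eq_matI) (use X M in auto)
qed

lemma embed0_blocks:
  assumes "Y \<in> carrier_mat n n"
  shows "lower_left_block n (embed0 n Y) = 0\<^sub>m n 1" and "moment n (embed0 n Y) = Y"
    and "embed0 n Y $$ (0, 0) = 0"
  using assms by (auto simp: embed0_def lower_left_block_def moment_def)

lemma
  assumes Y: "Y \<in> unitary_lie n" and p: "p \<in> hermitian_mats (n + 1)"
  shows moment_commutator_embed0: "moment n (commutator (embed0 n Y) p) = commutator Y (moment n p)"
    and lower_left_block_commutator_embed0: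
      "lower_left_block n (commutator (embed0 n Y) p) = Y * lower_left_block n p"
proof -
  have Yc: "Y \<in> carrier_mat n n"
    by (rule unitary_lieD(1)[OF Y])
  note E = embed0_unitary_lie[OF Y] and blocks = embed0_blocks[OF Yc]
  show "moment n (commutator (embed0 n Y) p) = commutator Y (moment n p)"
    unfolding moment_commutator[OF E p] blocks
    by (rule eq_matI)
      (use Yc in \<open>auto simp: scalar_prod_def lower_left_block_def commutator_def moment_def\<close>)
  show "lower_left_block n (commutator (embed0 n Y) p) = Y * lower_left_block n p"
    unfolding lower_left_block_commutator[OF E p] blocks
    by (rule eq_matI) (use Yc in \<open>auto simp: scalar_prod_def lower_left_block_def moment_def\<close>)
qed

lemma omega_orth_tangent_Korbit_subset:
  fixes n :: nat and p :: "complex mat"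
  assumes p: "p \<in> hermitian_mats (n + 1)"
  defines "z \<equiv> lower_left_block n p" and "M \<equiv> moment n p" and "c \<equiv> p $$ (0, 0)"
  shows "omega_orth n p (tangent_Korbit n p) \<subseteq>
    {offdiag_block n ((c \<cdot>\<^sub>m 1\<^sub>m n - M) * x + X * z) | X x.
      X \<in> unitary_lie n \<and> x \<in> carrier_mat n 1 \<and>
      mat_adjoint x * z + mat_adjoint z * x = 0\<^sub>m 1 1 \<and>
      x * mat_adjoint z + z * mat_adjoint x + commutator X M = 0\<^sub>m n n}"
    (is "_ \<subseteq> ?R")
proof
  fix A assume "A \<in> omega_orth n p (tangent_Korbit n p)"
  then have A: "A \<in> tangent_O n p" and A0: "moment n A = 0\<^sub>m n n"
    using omega_orth_tangent_Korbit_iff[OF p] by blast+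
  then obtain X1 where X1: "X1 \<in> unitary_lie (n + 1)" and AX: "A = commutator X1 p"
    unfolding tangent_O_def by blast
  define x where "x = lower_left_block n X1"
  define X where "X = moment n X1 - X1 $$ (0, 0) \<cdot>\<^sub>m 1\<^sub>m n"
  have X: "X \<in> unitary_lie n"
    unfolding X_def using X1 by (rule unitary_lie_moment_minus_corner)
  have x: "x \<in> carrier_mat n 1"
    unfolding x_def by (rule lower_left_block_carrier_mat)
  have offdiag: "A = offdiag_block n (lower_left_block n A)"
    using p A A0 by (rule tangent_O_eq_offdiag_block)
  have "x * mat_adjoint z + z * mat_adjoint x + commutator X M = 0\<^sub>m n n"
    using moment_commutator[OF X1 p] A0 commutator_minus_smult_one[of "moment n X1" n M]
    unfolding AX X_def x_def z_def M_def by simp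
  moreover have "mat_adjoint x * z + mat_adjoint z * x = 0\<^sub>m 1 1"
  proof -
    have "A $$ (0, 0) = 0"
      using arg_cong[OF offdiag, of "\<lambda>B. B $$ (0, 0)"] by (simp add: offdiag_block_def)
    then have "(mat_adjoint x * z + mat_adjoint z * x) $$ (0, 0) = 0"
      using commutator_corner[OF X1 p] unfolding AX x_def z_def by (metis neg_equal_0_iff_equal)
    then show ?thesis
      by (intro eq_matI) (simp_all add: x_def z_def)
  qed
  moreover have "A = offdiag_block n ((c \<cdot>\<^sub>m 1\<^sub>m n - M) * x + X * z)"
    using offdiag lower_left_block_commutator[OF X1 p]
    unfolding AX X_def x_def z_def M_def c_def by simp
  ultimately show "A \<in> ?R"
    using X x by blast
qed

lemma omega_orth_tangent_Korbit_supset: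
  fixes n :: nat and p :: "complex mat"
  assumes p: "p \<in> hermitian_mats (n + 1)"
  defines "z \<equiv> lower_left_block n p" and "M \<equiv> moment n p" and "c \<equiv> p $$ (0, 0)"
  shows "omega_orth n p (tangent_Korbit n p) \<supseteq>
    {offdiag_block n ((c \<cdot>\<^sub>m 1\<^sub>m n - M) * x + X * z) | X x.
      X \<in> unitary_lie n \<and> x \<in> carrier_mat n 1 \<and>
      mat_adjoint x * z + mat_adjoint z * x = 0\<^sub>m 1 1 \<and>
      x * mat_adjoint z + z * mat_adjoint x + commutator X M = 0\<^sub>m n n}"
    (is "_ \<supseteq> ?R")
proof
  fix A assume "A \<in> ?R"
  then obtain X x where X: "X \<in> unitary_lie n" and x: "x \<in> carrier_mat n 1"
    and moment0: "x * mat_adjoint z + z * mat_adjoint x + commutator X M = 0\<^sub>m n n"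
    and A: "A = offdiag_block n ((c \<cdot>\<^sub>m 1\<^sub>m n - M) * x + X * z)"
    by blast
  have Xc: "X \<in> carrier_mat n n"
    by (rule unitary_lieD(1)[OF X])
  define X1 where "X1 = four_block_mat (0\<^sub>m 1 1) (- mat_adjoint x) x X"
  have X1: "X1 \<in> unitary_lie (n + 1)"
    unfolding X1_def using X x by (rule four_block_unitary_lie)
  have blocks: "lower_left_block n X1 = x" "moment n X1 = X" "X1 $$ (0, 0) = 0"
    using x Xc by (auto simp: X1_def lower_left_block_def moment_def)
  have tangent: "commutator X1 p \<in> tangent_O n p"
    unfolding tangent_O_def using X1 by blast
  have "moment n (commutator X1 p) = 0\<^sub>m n n"
    using moment_commutator[OF X1 p] moment0 unfolding blocks z_def M_def by simp
  then have "commutator X1 p \<in> omega_orth n p (tangent_Korbit n p)"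
       and "commutator X1 p = offdiag_block n (lower_left_block n (commutator X1 p))"
    using omega_orth_tangent_Korbit_iff[OF p] tangent tangent_O_eq_offdiag_block[OF p tangent]
    by blast+
  moreover have "X - 0 \<cdot>\<^sub>m 1\<^sub>m n = X"
    using Xc by (intro eq_matI) auto
  then have "lower_left_block n (commutator X1 p) = (c \<cdot>\<^sub>m 1\<^sub>m n - M) * x + X * z"
    using lower_left_block_commutator[OF X1 p] unfolding blocks z_def M_def c_def by simp
  ultimately show "A \<in> omega_orth n p (tangent_Korbit n p)"
    using A by simp
qed

lemma tangent_Korbit_inter_omega_orth_eq:
  fixes n :: nat and p :: "complex mat"
  assumes p: "p \<in> hermitian_mats (n + 1)"
  shows "tangent_Korbit n p \<inter> omega_orth n p (tangent_Korbit n p) =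
    {offdiag_block n (Y * lower_left_block n p) | Y. Y \<in> unitary_lie n \<and> commutator Y (moment n p) = 0\<^sub>m n n}"
    (is "?L = ?R")
proof -
  have orth_iff: "commutator (embed0 n Y) p \<in> omega_orth n p (tangent_Korbit n p) \<longleftrightarrow>
      commutator Y (moment n p) = 0\<^sub>m n n"
    and offdiag: "commutator Y (moment n p) = 0\<^sub>m n n \<Longrightarrow>
      commutator (embed0 n Y) p = offdiag_block n (Y * lower_left_block n p)"
    if Y: "Y \<in> unitary_lie n" for Y
  proof -
    have tangent: "commutator (embed0 n Y) p \<in> tangent_O n p"
      unfolding tangent_O_def using embed0_unitary_lie[OF Y] by blast
    show "commutator (embed0 n Y) p \<in> omega_orth n p (tangent_Korbit n p) \<longleftrightarrow>
        commutator Y (moment n p) = 0\<^sub>m n n"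
      using omega_orth_tangent_Korbit_iff[OF p] tangent moment_commutator_embed0[OF Y p] by simp
    show "commutator (embed0 n Y) p = offdiag_block n (Y * lower_left_block n p)"
      if "commutator Y (moment n p) = 0\<^sub>m n n"
      using tangent_O_eq_offdiag_block[OF p tangent] that
        moment_commutator_embed0[OF Y p] lower_left_block_commutator_embed0[OF Y p] by simp
  qed
  show ?thesis
  proof (intro equalityI subsetI)
    fix A assume A: "A \<in> ?L"
    then obtain Y where Y: "Y \<in> unitary_lie n" and AY: "A = commutator (embed0 n Y) p"
      unfolding tangent_Korbit_def by blast
    then have "commutator Y (moment n p) = 0\<^sub>m n n"
      using A orth_iff by blast
    with Y AY offdiag show "A \<in> ?R"
      by blast
  next
    fix A assume "A \<in> ?R"
    then obtain Y where Y: "Y \<in> unitary_lie n" and YM: "commutator Y (moment n p) = 0\<^sub>m n n"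
      and A: "A = offdiag_block n (Y * lower_left_block n p)"
      by blast
    have "commutator (embed0 n Y) p \<in> tangent_Korbit n p"
      unfolding tangent_Korbit_def using Y by blast
    moreover have "commutator (embed0 n Y) p \<in> omega_orth n p (tangent_Korbit n p)"
      using orth_iff[OF Y] YM by simp
    moreover have "commutator (embed0 n Y) p = A"
      using offdiag[OF Y YM] A by simp
    ultimately show "A \<in> ?L"
      by blast
  qed
qed

theorem lemma4p3:
  fixes n :: nat and lam mu :: "nat \<Rightarrow> real" and p :: "complex mat"
  assumes "n \<ge> 1"
    and "\<And>i j. i \<le> j \<Longrightarrow> j < n + 1 \<Longrightarrow> lam j \<le> lam i"
    and "\<And>i j. i \<le> j \<Longrightarrow> j < n \<Longrightarrow> mu j \<le> mu i"
    and "p \<in> orbit_O n lam"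
    and "moment n p = diag_of n mu"
  defines "M \<equiv> diag_of n mu"
    and "z \<equiv> mat n 1 (\<lambda>(i, j). p $$ (i + 1, 0))"
    and "c \<equiv> complex_of_real ((\<Sum>i<n + 1. lam i) - (\<Sum>i<n. mu i))"
  shows "(omega_orth n p (tangent_Korbit n p) =
           {offdiag_block n ((c \<cdot>\<^sub>m 1\<^sub>m n - M) * x + X * z) | X x.
              X \<in> unitary_lie n \<and> x \<in> carrier_mat n 1 \<and>
              mat_adjoint x * z + mat_adjoint z * x = 0\<^sub>m 1 1 \<and>
              x * mat_adjoint z + z * mat_adjoint x + commutator X M = 0\<^sub>m n n}) \<and>
         (tangent_Korbit n p \<inter> omega_orth n p (tangent_Korbit n p) =
           {offdiag_block n (Y * z) | Y. Y \<in> unitary_lie n \<and> commutator Y M = 0\<^sub>m n n})"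
proof -
  have p: "p \<in> hermitian_mats (n + 1)"
    using assms(4) by (simp add: orbit_O_def)
  have M: "moment n p = M"
    using assms(5) by (simp add: M_def)
  have z: "lower_left_block n p = z"
    by (simp add: z_def lower_left_block_def)
  have c: "p $$ (0, 0) = c"
  proof -
    have "mtrace M = (\<Sum>i<n. complex_of_real (mu i))"
      by (simp add: M_def mtrace_def diag_of_def)
    then show ?thesis
      using mtrace_split_corner[OF hermitian_matsD(1)[OF p, simplified]] mtrace_orbit_O[OF assms(4)] M
      by (simp add: c_def)
  qed
  show ?thesis
    using omega_orth_tangent_Korbit_subset[OF p] omega_orth_tangent_Korbit_supset[OF p]
      tangent_Korbit_inter_omega_orth_eq[OF p]
    unfolding M z c by blast
qed

end
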